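(* Let $1\le k\le n-1$. If $\lambda\in\Gamma^+_k\subset\mathbb R^n$ and $\lambda_i\le0$ for some index $i$, then $$\sum_{j\ne i}\frac{\partial\sigma_k(\lambda)}{\partial\lambda_j}\ \le\ (n-k)\,\frac{\partial\sigma_k(\lambda)}{\partial\lambda_i}.$$
   Context: $\sigma_k(\lambda)=\sum_{i_1<\dots<i_k}\lambda_{i_1}\cdots\lambda_{i_k}$ is the $k$-th elementary symmetric function; $\Gamma^+_k=\{\lambda\in\mathbb R^n:\sigma_j(\lambda)>0,\ 1\le j\le k\}$. *)

theory Defs
  imports "HOL-Analysis.Analysis"
begin

definition sigma :: "nat \<Rightarrow> real ^ 'n \<Rightarrow> real" where
  "sigma k lam = (\<Sum>S \<in> {S :: 'n set. card S = k}. \<Prod>i\<in>S. lam $ i)"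

definition Gamma_plus :: "nat \<Rightarrow> (real ^ 'n) set" where
  "Gamma_plus k = {lam. \<forall>j. 1 \<le> j \<and> j \<le> k \<longrightarrow> sigma j lam > 0}"

definition dsigma :: "nat \<Rightarrow> 'n \<Rightarrow> real ^ 'n \<Rightarrow> real" where
  "dsigma k j lam = deriv (\<lambda>t. sigma k (\<chi> m. if m = j then t else lam $ m)) (lam $ j)"

end

theory Submission
  imports Defs
begin

text \<open>
  Write \<open>\<sigma>\<^sub>m(\<lambda>|j)\<close> for the \<open>m\<close>-th elementary symmetric function of \<open>\<lambda>\<close>
  with the \<open>j\<close>-th entry deleted. As \<open>\<sigma>\<^sub>k\<close> is affine in each variable,
  \<open>\<partial>\<sigma>\<^sub>k/\<partial>\<lambda>\<^sub>j = \<sigma>\<^sub>m(\<lambda>|j)\<close> with \<open>m = k - 1\<close>, and double counting gives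
  \<open>\<Sum>\<^sub>j \<sigma>\<^sub>m(\<lambda>|j) = (n - m) \<sigma>\<^sub>m(\<lambda>)\<close>. So it suffices to show
  \<open>\<sigma>\<^sub>m(\<lambda>) \<le> \<sigma>\<^sub>m(\<lambda>|i)\<close>. By the expansion
  \<open>\<sigma>\<^sub>p\<^sub>+\<^sub>1(\<lambda>) = \<lambda>\<^sub>i \<sigma>\<^sub>p(\<lambda>|i) + \<sigma>\<^sub>p\<^sub>+\<^sub>1(\<lambda>|i)\<close> and \<open>\<lambda>\<^sub>i \<le> 0\<close>, positivity of
  \<open>\<sigma>\<^sub>1(\<lambda>), \<dots>, \<sigma>\<^sub>k(\<lambda>)\<close> propagates inductively to \<open>\<sigma>\<^sub>p(\<lambda>|i) > 0\<close> for \<open>p \<le> k\<close>;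
  the same expansion at \<open>p = m - 1\<close> then gives the claim.
\<close>

definition esym :: "nat \<Rightarrow> ('a \<Rightarrow> 'b::comm_semiring_1) \<Rightarrow> 'a set \<Rightarrow> 'b" where
  "esym m f T = (\<Sum>S \<in> {S. S \<subseteq> T \<and> card S = m}. prod f S)"

lemma esym_0 [simp]:
  assumes "finite T"
  shows "esym 0 f T = 1"
proof -
  have "{S. S \<subseteq> T \<and> card S = 0} = {{}}"
    using assms finite_subset by fastforce
  then show ?thesis by (simp add: esym_def)
qed

lemma esym_cong: "(\<And>x. x \<in> T \<Longrightarrow> f x = g x) \<Longrightarrow> esym m f T = esym m g T"
  unfolding esym_def by (intro sum.cong refl prod.cong) auto

lemma esym_Suc_remove:
  assumes fin: "finite T" and i: "i \<in> T"
  shows "esym (Suc m) f T = f i * esym m f (T - {i}) + esym (Suc m) f (T - {i})"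
proof -
  let ?A = "{S. S \<subseteq> T \<and> card S = Suc m}"
  let ?B = "{S. S \<subseteq> T - {i} \<and> card S = m}"
  let ?C = "{S. S \<subseteq> T - {i} \<and> card S = Suc m}"
  have split: "?A = {S \<in> ?A. i \<in> S} \<union> ?C" and disjoint: "{S \<in> ?A. i \<in> S} \<inter> ?C = {}"
    by auto
  have with_i: "{S \<in> ?A. i \<in> S} = insert i ` ?B"
  proof (intro equalityI subsetI)
    fix S assume S: "S \<in> {S \<in> ?A. i \<in> S}"
    then have "S - {i} \<in> ?B" and "S = insert i (S - {i})"
      using fin finite_subset by auto
    then show "S \<in> insert i ` ?B" by blast
  next
    fix S assume "S \<in> insert i ` ?B"
    then obtain R where R: "R \<subseteq> T - {i}" "card R = m" "S = insert i R" by blast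
    moreover have "finite R" and "i \<notin> R" using R(1) fin finite_subset by blast+
    ultimately have "card S = Suc m" by simp
    then show "S \<in> {S \<in> ?A. i \<in> S}" using R i by blast
  qed
  have "esym (Suc m) f T = sum (prod f) (insert i ` ?B) + sum (prod f) ?C"
    unfolding esym_def with_i [symmetric]
    by (subst split, rule sum.union_disjoint) (use fin disjoint in auto)
  also have "sum (prod f) (insert i ` ?B) = (\<Sum>R\<in>?B. f i * prod f R)"
  proof -
    have "inj_on (insert i) ?B" by (auto simp: inj_on_def)
    moreover have "prod f (insert i R) = f i * prod f R" if "R \<in> ?B" for R
      using that by (subst prod.insert) (auto intro: finite_subset [OF _ fin])
    ultimately show ?thesis by (simp add: sum.reindex)
  qed
  finally show ?thesis unfolding esym_def by (simp add: sum_distrib_left)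
qed

text \<open>Each \<open>m\<close>-subset of \<open>T\<close> avoids exactly \<open>card T - m\<close> of the deleted indices.\<close>

lemma sum_esym_remove:
  assumes fin: "finite T"
  shows "(\<Sum>j\<in>T. esym m f (T - {j})) = of_nat (card T - m) * esym m f T"
proof -
  let ?P = "{S. S \<subseteq> T \<and> card S = m}"
  have "(\<Sum>j\<in>T. esym m f (T - {j})) = (\<Sum>j\<in>T. \<Sum>S\<in>?P. if j \<notin> S then prod f S else 0)"
  proof (rule sum.cong [OF refl])
    fix j
    have "{S. S \<subseteq> T - {j} \<and> card S = m} = {S \<in> ?P. j \<notin> S}" by auto
    moreover have "finite ?P" using fin by simp
    ultimately show "esym m f (T - {j}) = (\<Sum>S\<in>?P. if j \<notin> S then prod f S else 0)"
      by (simp only: esym_def sum.inter_filter)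
  qed
  also have "\<dots> = (\<Sum>S\<in>?P. \<Sum>j\<in>T. if j \<notin> S then prod f S else 0)"
    by (rule sum.swap)
  also have "\<dots> = (\<Sum>S\<in>?P. of_nat (card T - m) * prod f S)"
  proof (rule sum.cong [OF refl])
    fix S assume S: "S \<in> ?P"
    have "(\<Sum>j\<in>T. if j \<notin> S then prod f S else 0) = of_nat (card (T - S)) * prod f S"
      using fin by (simp add: sum.If_cases Diff_eq Collect_neg_eq)
    also have "card (T - S) = card T - m"
      using S fin by (auto simp: card_Diff_subset finite_subset)
    finally show "(\<Sum>j\<in>T. if j \<notin> S then prod f S else 0) = of_nat (card T - m) * prod f S" .
  qed
  finally show ?thesis unfolding esym_def by (simp add: sum_distrib_left)
qed

lemma esym_remove_pos:
  fixes f :: "'a \<Rightarrow> 'b::linordered_idom"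
  assumes fin: "finite T" and i: "i \<in> T" and nonpos: "f i \<le> 0"
    and pos: "\<And>q. 1 \<le> q \<Longrightarrow> q \<le> k \<Longrightarrow> esym q f T > 0"
    and "p \<le> k"
  shows "esym p f (T - {i}) > 0"
  using \<open>p \<le> k\<close>
proof (induction p)
  case 0
  then show ?case using fin by simp
next
  case (Suc q)
  have "f i * esym q f (T - {i}) \<le> 0"
    using Suc nonpos by (simp add: mult_nonpos_nonneg)
  moreover have "esym (Suc q) f T > 0" using pos Suc.prems by simp
  ultimately show ?case using esym_Suc_remove [OF fin i, of q f] by linarith
qed

lemma esym_le_esym_remove:
  fixes f :: "'a \<Rightarrow> 'b::linordered_idom"
  assumes fin: "finite T" and i: "i \<in> T" and nonpos: "f i \<le> 0"
    and nonneg: "0 < m \<Longrightarrow> esym (m - 1) f (T - {i}) \<ge> 0"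
  shows "esym m f T \<le> esym m f (T - {i})"
proof (cases m)
  case 0
  then show ?thesis using fin by simp
next
  case (Suc p)
  then have "f i * esym p f (T - {i}) \<le> 0"
    using nonpos nonneg by (simp add: mult_nonpos_nonneg)
  then show ?thesis using esym_Suc_remove [OF fin i, of p f] Suc by simp
qed

lemma sigma_eq_esym: "sigma k lam = esym k (($) lam) UNIV"
  unfolding sigma_def esym_def by simp

lemma dsigma_eq_esym: "dsigma (Suc m) j lam = esym m (($) lam) (UNIV - {j})"
proof -
  let ?D = "esym m (($) lam) (UNIV - {j})"
  let ?R = "esym (Suc m) (($) lam) (UNIV - {j})"
  have affine: "(\<lambda>t. sigma (Suc m) (\<chi> x. if x = j then t else lam $ x)) = (\<lambda>t. t * ?D + ?R)"
  proof
    fix t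
    let ?lam' = "\<chi> x. if x = j then t else lam $ x"
    have "sigma (Suc m) ?lam'
        = t * esym m (($) ?lam') (UNIV - {j}) + esym (Suc m) (($) ?lam') (UNIV - {j})"
      unfolding sigma_eq_esym by (subst esym_Suc_remove [of _ j]) auto
    also have "esym m (($) ?lam') (UNIV - {j}) = ?D"
      by (rule esym_cong) simp
    also have "esym (Suc m) (($) ?lam') (UNIV - {j}) = ?R"
      by (rule esym_cong) simp
    finally show "sigma (Suc m) ?lam' = t * ?D + ?R" .
  qed
  have "((\<lambda>t. t * ?D + ?R) has_field_derivative ?D) (at (lam $ j))"
    by (auto intro!: derivative_eq_intros)
  then show ?thesis unfolding dsigma_def affine by (rule DERIV_imp_deriv)
qed

theorem mainTheorem4:
  fixes lam :: "real ^ 'n" and k :: nat and i :: 'n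
  assumes "1 \<le> k" and "k \<le> CARD('n) - 1"
    and "lam \<in> Gamma_plus k"
    and "lam $ i \<le> 0"
  shows "(\<Sum>j \<in> UNIV - {i}. dsigma k j lam) \<le> real (CARD('n) - k) * dsigma k i lam"
proof -
  obtain m where k: "k = Suc m" using assms(1) by (cases k) auto
  let ?D = "\<lambda>j. esym m (($) lam) (UNIV - {j})"
  have "esym p (($) lam) (UNIV - {i}) > 0" if "p \<le> k" for p
    using assms(3,4) that
    by (intro esym_remove_pos [where k = k]) (auto simp: Gamma_plus_def sigma_eq_esym)
  then have le: "esym m (($) lam) UNIV \<le> ?D i"
    using assms(4) k by (intro esym_le_esym_remove) (auto intro: less_imp_le)
  have dsigma: "dsigma k j lam = ?D j" for j
    unfolding k by (rule dsigma_eq_esym)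
  have "(\<Sum>j \<in> UNIV - {i}. dsigma k j lam) = real (CARD('n) - m) * esym m (($) lam) UNIV - ?D i"
    using sum_esym_remove [of "UNIV :: 'n set" m] by (simp add: dsigma sum_diff1)
  also have "\<dots> \<le> real (CARD('n) - m) * ?D i - ?D i"
    using le by (simp add: mult_left_mono)
  also have "\<dots> = real (CARD('n) - k) * ?D i"
  proof -
    have "real (CARD('n) - m) = real (CARD('n) - k) + 1"
      using k assms(2) by simp
    then show ?thesis by (simp add: algebra_simps)
  qed
  finally show ?thesis by (simp only: dsigma)
qed

end
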